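(* Let $n\ge 1$ be an integer. (1) If $a$ is a real number with $a>2$, then $\max\{B_i(a): 2^{n-1}\le i\le 2^{n}\}=a^{n}=B_{2^n}(a)$. (2) If $0<a<2$, then $$\min\{B_i(a): 2^{n-1}\le i\le 2^{n}\}=\begin{cases} a^{n} & \text{if } 0<a\le 1,\\ a^{n-1} & \text{if } 1<a<2.\end{cases}$$
   Context: The Stern polynomials $B_n(t)\in\mathbb{Z}[t]$, $n\ge 0$, are defined by $B_0(t)=0$, $B_1(t)=1$, $B_{2n}(t)=tB_n(t)$ and $B_{2n+1}(t)=B_n(t)+B_{n+1}(t)$ for $n\ge 1$. *)

theory Defs
  imports "HOL-Computational_Algebra.Polynomial"
begin

function stern_poly :: "nat \<Rightarrow> int poly" where
  "stern_poly n =
     (if n = 0 then 0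
      else if n = 1 then 1
      else if even n then [:0, 1:] * stern_poly (n div 2)
      else stern_poly (n div 2) + stern_poly (n div 2 + 1))"

  by pat_completeness auto
termination by (relation "measure id") (auto elim: oddE)

declare stern_poly.simps [simp del]

definition stern_eval :: "nat \<Rightarrow> real \<Rightarrow> real" where
  "stern_eval n a = poly (map_poly of_int (stern_poly n)) a"

end

theory Submission
  imports Defs
begin

(* Writing B_i for the Stern polynomials, the evaluations at a real point a satisfy
   B_0 = 0, B_1 = 1, B_(2m) = a B_m and B_(2m+1) = B_m + B_(m+1); in particular
   B_(2^n) = a^n, and B_i(a) \<ge> 0 for a \<ge> 0.  The theorem follows from three
   comparison lemmas, each proved by induction on n, splitting i by parity:
     (a) a \<ge> 2,     0 \<le> i \<le> 2^n            \<Longrightarrow>  B_i(a) \<le> a^n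
         (an odd index costs a factor 2 \<le> a);
     (b) 0 \<le> a \<le> 1, 1 \<le> i \<le> 2^n            \<Longrightarrow>  a^n \<le> B_i(a)
         (for odd i the term B_(m+1) alone already suffices);
     (c) 1 \<le> a \<le> 2, 2^n \<le> i \<le> 2^(n+1)     \<Longrightarrow>  a^n \<le> B_i(a)
         (an odd index in this block has both parents in the previous block,
          and two copies of a^n beat one factor a \<le> 2).
   Since B_(2^k)(a) = a^k is attained at both ends of the block {2^(n-1)..2^n},
   the maximum for a > 2 and the minimum for 0 < a < 2 are read off directly. *)

lemma map_poly_of_int_add:
  "map_poly (of_int :: int \<Rightarrow> 'a :: ring_1) (p + q) = map_poly of_int p + map_poly of_int q"
  by (rule poly_eqI) (simp add: coeff_map_poly)

(* Indices 1 and 2m+1 are written with Suc, the simplifier's normal form for them. *)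
lemma stern_eval_0 [simp]: "stern_eval 0 a = 0"
  by (simp add: stern_eval_def stern_poly.simps)

lemma stern_eval_1 [simp]: "stern_eval (Suc 0) a = 1"
  by (simp add: stern_eval_def stern_poly.simps)

lemma stern_eval_double: "stern_eval (2 * m) a = a * stern_eval m a"
proof (cases "m = 0")
  case False
  then have "stern_poly (2 * m) = pCons 0 (stern_poly m)"
    by (subst stern_poly.simps) simp
  then show ?thesis
    by (simp add: stern_eval_def map_poly_pCons)
qed simp

lemma stern_eval_odd: "stern_eval (Suc (2 * m)) a = stern_eval m a + stern_eval (m + 1) a"
proof (cases "m = 0")
  case False
  then have "stern_poly (Suc (2 * m)) = stern_poly m + stern_poly (m + 1)"
    by (subst stern_poly.simps) simp
  then show ?thesis
    by (simp add: stern_eval_def map_poly_of_int_add)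
qed simp

lemma nat_parity_cases:
  fixes i :: nat
  obtains (even) m where "i = 2 * m" | (odd) m where "i = 2 * m + 1"
  by (metis evenE oddE)

lemma stern_induct [case_names zero one double odd]:
  fixes P :: "nat \<Rightarrow> bool" and i :: nat
  assumes "P 0" and "P 1"
    and "\<And>m. P m \<Longrightarrow> P (2 * m)"
    and "\<And>m. P m \<Longrightarrow> P (m + 1) \<Longrightarrow> P (2 * m + 1)"
  shows "P i"
proof (induction i rule: less_induct)
  case (less i)
  show ?case
  proof (cases i rule: nat_parity_cases)
    case (even m)
    then show ?thesis
      using assms(1,3) less[of m] by (cases "m = 0") auto
  next
    case (odd m)
    then show ?thesis
      using assms(2,4) less[of m] less[of "m + 1"] by (cases "m = 0") auto
  qed
qed

lemma stern_eval_nonneg: "a \<ge> 0 \<Longrightarrow> stern_eval i a \<ge> 0"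
  by (induction i rule: stern_induct) (simp_all add: stern_eval_double stern_eval_odd)

lemma stern_eval_pow2: "stern_eval (2 ^ n) a = a ^ n"
  by (induction n) (simp_all add: stern_eval_double)

lemma stern_eval_le_pow:
  assumes "a \<ge> 2" and "i \<le> 2 ^ n"
  shows "stern_eval i a \<le> a ^ n"
  using assms(2)
proof (induction n arbitrary: i)
  case 0
  then have "i = 0 \<or> i = 1" by auto
  then show ?case by auto
next
  case (Suc n)
  show ?case
  proof (cases i rule: nat_parity_cases)
    case (even m)
    then have "stern_eval m a \<le> a ^ n"
      using Suc by simp
    then show ?thesis
      using even assms(1) by (simp add: stern_eval_double)
  next
    case (odd m)
    then have "stern_eval m a \<le> a ^ n" "stern_eval (m + 1) a \<le> a ^ n"
      using Suc by simp_all
    moreover have "2 * a ^ n \<le> a * a ^ n"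
      using assms(1) by (intro mult_right_mono) auto
    ultimately show ?thesis
      using odd by (simp add: stern_eval_odd)
  qed
qed

lemma pow_le_stern_eval_small:
  assumes "0 \<le> a" "a \<le> 1" and "1 \<le> i" "i \<le> 2 ^ n"
  shows "a ^ n \<le> stern_eval i a"
  using assms(3,4)
proof (induction n arbitrary: i)
  case 0
  then show ?case by simp
next
  case (Suc n)
  show ?case
  proof (cases i rule: nat_parity_cases)
    case (even m)
    then have "a ^ n \<le> stern_eval m a"
      using Suc by simp
    then show ?thesis
      using even assms(1) by (simp add: stern_eval_double mult_left_mono)
  next
    case (odd m)
    have "a ^ Suc n \<le> a ^ n"
      using assms(1,2) mult_left_le_one_le[of "a ^ n" a] by simp
    also have "a ^ n \<le> stern_eval (m + 1) a"
      using Suc odd by simp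
    also have "\<dots> \<le> stern_eval i a"
      using odd stern_eval_nonneg[OF assms(1), of m] by (simp add: stern_eval_odd)
    finally show ?thesis .
  qed
qed

lemma odd_index_parents_in_block:
  fixes m n :: nat
  assumes "2 ^ Suc n \<le> 2 * m + 1" "2 * m + 1 \<le> 2 ^ Suc (Suc n)"
  shows "2 ^ n \<le> m" "m + 1 \<le> 2 ^ Suc n"
proof -
  define p :: nat where "p = 2 ^ n"
  have "2 * p \<le> 2 * m + 1" "2 * m + 1 \<le> 4 * p"
    using assms by (simp_all add: p_def)
  then have "p \<le> m \<and> m + 1 \<le> 2 * p" by presburger
  then show "2 ^ n \<le> m" "m + 1 \<le> 2 ^ Suc n"
    by (simp_all add: p_def)
qed

lemma pow_le_stern_eval_mid:
  assumes "1 \<le> a" "a \<le> 2" and "2 ^ n \<le> i" "i \<le> 2 ^ Suc n"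
  shows "a ^ n \<le> stern_eval i a"
  using assms(3,4)
proof (induction n arbitrary: i)
  case 0
  then have "i = 1 \<or> i = 2" by auto
  then show ?case
    using assms(1) stern_eval_double[of 1 a] by auto
next
  case (Suc n)
  show ?case
  proof (cases i rule: nat_parity_cases)
    case (even m)
    then have "a ^ n \<le> stern_eval m a"
      using Suc by simp
    then show ?thesis
      using even assms(1) by (simp add: stern_eval_double mult_left_mono)
  next
    case (odd m)
    then have "2 ^ n \<le> m" "m + 1 \<le> 2 ^ Suc n"
      using odd_index_parents_in_block Suc.prems by simp_all
    then have "a ^ n \<le> stern_eval m a" "a ^ n \<le> stern_eval (m + 1) a"
      using Suc.IH by simp_all
    moreover have "a * a ^ n \<le> 2 * a ^ n"
      using assms by (intro mult_right_mono) auto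
    ultimately show ?thesis
      using odd by (simp add: stern_eval_odd)
  qed
qed

lemma Max_image_attained:
  assumes "finite A" "x \<in> A" "\<And>i. i \<in> A \<Longrightarrow> f i \<le> f x"
  shows "Max (f ` A) = f x"
  using assms by (intro Max_eqI) auto

lemma Min_image_attained:
  assumes "finite A" "x \<in> A" "\<And>i. i \<in> A \<Longrightarrow> f x \<le> f i"
  shows "Min (f ` A) = f x"
  using assms by (intro Min_eqI) auto

theorem theorem2p7:
  fixes n :: nat
  assumes "n \<ge> 1"
  shows "(\<forall>a::real. a > 2 \<longrightarrow>
           Max ((\<lambda>i. stern_eval i a) ` {2^(n-1)..2^n}) = a ^ n \<and>
           stern_eval (2^n) a = a ^ n) \<and>
         (\<forall>a::real. 0 < a \<and> a < 2 \<longrightarrow>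
           Min ((\<lambda>i. stern_eval i a) ` {2^(n-1)..2^n}) =
             (if a \<le> 1 then a ^ n else a ^ (n - 1)))"
proof -
  obtain k where n: "n = Suc k"
    using assms by (cases n) auto
  define I :: "nat set" where "I = {2 ^ k..2 ^ n}"
  have "finite I" and ends: "2 ^ k \<in> I" "2 ^ n \<in> I"
    by (simp_all add: I_def n)
  have one_le: "1 \<le> i" if "i \<in> I" for i :: nat
  proof -
    have "(1::nat) \<le> 2 ^ k" by simp
    moreover have "2 ^ k \<le> i" using that by (simp add: I_def)
    ultimately show ?thesis by (rule order_trans)
  qed
  have max: "Max ((\<lambda>i. stern_eval i a) ` I) = a ^ n" if "a > 2" for a :: real
  proof -
    have "Max ((\<lambda>i. stern_eval i a) ` I) = stern_eval (2 ^ n) a"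
      using that by (intro Max_image_attained \<open>finite I\<close> ends)
        (simp add: stern_eval_pow2 stern_eval_le_pow I_def)
    then show ?thesis by (simp add: stern_eval_pow2)
  qed
  have min_small: "Min ((\<lambda>i. stern_eval i a) ` I) = a ^ n" if "0 < a" "a \<le> 1" for a :: real
  proof -
    have "Min ((\<lambda>i. stern_eval i a) ` I) = stern_eval (2 ^ n) a"
      using that one_le by (intro Min_image_attained \<open>finite I\<close> ends)
        (simp add: stern_eval_pow2 pow_le_stern_eval_small I_def)
    then show ?thesis by (simp add: stern_eval_pow2)
  qed
  have min_mid: "Min ((\<lambda>i. stern_eval i a) ` I) = a ^ k" if "1 < a" "a < 2" for a :: real
  proof -
    have "Min ((\<lambda>i. stern_eval i a) ` I) = stern_eval (2 ^ k) a"
      using that by (intro Min_image_attained \<open>finite I\<close> ends)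
        (simp add: stern_eval_pow2 pow_le_stern_eval_mid I_def n)
    then show ?thesis by (simp add: stern_eval_pow2)
  qed
  have "n - 1 = k"
    by (simp add: n)
  then show ?thesis
    using max min_small min_mid unfolding I_def by (simp add: stern_eval_pow2)
qed

end
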